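(* Let $\nu$ be a non-degenerate probability measure on $\mathbb{R}$ with support bounded from above, with one-sided domain of means $(m_0,m_+)$ and pseudo-variance function $\mathbb{V}$ (as defined in the context), and let $B=B(\nu)=\max\{0,\sup\operatorname{supp}(\nu)\}$. Fix $m_1\in(m_0,m_+)$ and consider the Cauchy–Stieltjes kernel family generated by $Q_{m_1}$, with mean function $k_1$, domain of means $(\overline m_0,\overline m_+)=k_1((0,\theta_+))$ and pseudo-variance function $\mathbb{V}_1$. For $m\in(m_0,m_+)$ set $\overline m=k_1(\psi(m))$. Then: (i) $$\overline m=\begin{cases}\dfrac{m^2\mathbb{V}(m_1)-m_1^2\mathbb{V}(m)}{m\mathbb{V}(m_1)-m_1\mathbb{V}(m)}&\text{if }m\neq m_1,\\[2mm]\dfrac{2m_1\mathbb{V}(m_1)-m_1^2\mathbb{V}'(m_1)}{\mathbb{V}(m_1)-m_1\mathbb{V}'(m_1)}&\text{if }m=m_1;\end{cases}$$ (ii) the one-sided domain of means of the family generated by $Q_{m_1}$ is $$(\overline m_0,\overline m_+)=\left(m_1,\ \frac{m_+G_\nu(B)-m_1^2/\mathbb{V}(m_1)}{G_\nu(B)-m_1/\mathbb{V}(m_1)}\right),$$ where $G_\nu(B)$ is interpreted as the limit $\lim_{b\to B^+}G_\nu(b)$ (the right endpoint being understood as the corresponding limit as $b\to B^+$); (iii) $$\frac{\mathbb{V}_1(\overline m)}{\overline m}+\overline m=\frac{\mathbb{V}(m)}{m}+m.$$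
   Context: Let $A(\nu)=\sup\operatorname{supp}(\nu)$, $B=\max\{0,A(\nu)\}$, $\theta_+=1/B\in(0,\infty]$. For $\theta\in[0,\theta_+)$: $M(\theta)=\int\frac{\nu(dx)}{1-\theta x}$, $P_\theta(dx)=\frac{\nu(dx)}{M(\theta)(1-\theta x)}$, $k(\theta)=\int xP_\theta(dx)=\frac{M(\theta)-1}{\theta M(\theta)}$. The function $k$ is strictly increasing on $(0,\theta_+)$ and maps it onto $(m_0,m_+)$, where $m_0=\lim_{\theta\to0^+}k(\theta)$, $m_+=\lim_{\theta\to\theta_+}k(\theta)$; $\psi:(m_0,m_+)\to(0,\theta_+)$ is its inverse. The pseudo-variance function is $\mathbb{V}(m)=m\big(\frac{1}{\psi(m)}-m\big)$, i.e. $\frac{\mathbb{V}(m)}{m}=\frac1{\psi(m)}-m$ (at $m=0$, $\mathbb{V}(m)/m$ means $1/\psi(0)$). $Q_m=P_{\psi(m)}$ is the member with mean $m$; for $m\ne0$, $Q_m(dx)=\frac{\mathbb{V}(m)}{\mathbb{V}(m)+m(m-x)}\nu(dx)$. $G_\nu(z)=\int\frac{\nu(dx)}{z-x}$ is the Cauchy transform. For the family generated by $Q_{m_1}$: $M_1(\theta)=\int\frac{Q_{m_1}(dx)}{1-\theta x}$, $\overline P_\theta(dx)=\frac{Q_{m_1}(dx)}{M_1(\theta)(1-\theta x)}$, $k_1(\theta)=\int x\overline P_\theta(dx)$ for $\theta\in(0,\theta_+)$, $k_1$ is strictly increasing with image $(\overline m_0,\overline m_+)$ and inverse $\psi_1$,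 and $\mathbb{V}_1(\overline m)=\overline m\big(\frac1{\psi_1(\overline m)}-\overline m\big)$. *)

theory Defs
  imports "HOL-Probability.Probability"
begin

definition supp :: "real measure \<Rightarrow> real set" where
  "supp \<mu> = {x. \<forall>e>0. measure \<mu> {x - e<..<x + e} > 0}"

definition Bnd :: "real measure \<Rightarrow> real" where
  "Bnd \<mu> = max 0 (Sup (supp \<mu>))"

text \<open>The parameter interval (0, theta_+) with theta_+ = 1/B (= infinity if B = 0).\<close>
definition Theta :: "real measure \<Rightarrow> real set" where
  "Theta \<mu> = {\<theta>. 0 < \<theta> \<and> \<theta> * Bnd \<mu> < 1}"

definition theta_plus_filter :: "real measure \<Rightarrow> real filter" where
  "theta_plus_filter \<mu> = (if Bnd \<mu> = 0 then at_top else at_left (1 / Bnd \<mu>))"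

definition Mf :: "real measure \<Rightarrow> real \<Rightarrow> real" where
  "Mf \<mu> \<theta> = (\<integral>x. 1 / (1 - \<theta> * x) \<partial>\<mu>)"

definition kf :: "real measure \<Rightarrow> real \<Rightarrow> real" where
  "kf \<mu> \<theta> = (Mf \<mu> \<theta> - 1) / (\<theta> * Mf \<mu> \<theta>)"

definition psif :: "real measure \<Rightarrow> real \<Rightarrow> real" where
  "psif \<mu> m = the_inv_into (Theta \<mu>) (kf \<mu>) m"

definition Vf :: "real measure \<Rightarrow> real \<Rightarrow> real" where
  "Vf \<mu> m = m * (1 / psif \<mu> m - m)"

text \<open>The quantity V(m)/m, with the convention V(0)/0 = 1/psi(0).\<close>
definition Vratio :: "real measure \<Rightarrow> real \<Rightarrow> real" where
  "Vratio \<mu> m = 1 / psif \<mu> m - m"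

definition mplus :: "real measure \<Rightarrow> real" where
  "mplus \<mu> = Lim (theta_plus_filter \<mu>) (kf \<mu>)"

definition Pf :: "real measure \<Rightarrow> real \<Rightarrow> real measure" where
  "Pf \<mu> \<theta> = density \<mu> (\<lambda>x. ennreal (1 / (Mf \<mu> \<theta> * (1 - \<theta> * x))))"

definition Qf :: "real measure \<Rightarrow> real \<Rightarrow> real measure" where
  "Qf \<mu> m = Pf \<mu> (psif \<mu> m)"

definition Gf :: "real measure \<Rightarrow> real \<Rightarrow> real" where
  "Gf \<mu> z = (\<integral>x. 1 / (z - x) \<partial>\<mu>)"

end

theory Submission
  imports Defs
begin

text \<open>Write \<open>M(\<theta>) = \<integral> 1/(1 - \<theta>x) d\<nu>\<close>, \<open>G(\<theta>) = \<theta> M(\<theta>)\<close>. The member \<open>Q\<^sub>m\<^sub>1 = P\<^sub>\<theta>\<^sub>1\<close> has density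
  \<open>1/(M(\<theta>\<^sub>1)(1 - \<theta>\<^sub>1x))\<close>, so partial fractions give its mean function as a difference quotient,
  \<open>k\<^sub>1(\<theta>) = (M(\<theta>\<^sub>1) - M(\<theta>))/(G(\<theta>\<^sub>1) - G(\<theta>))\<close>, while \<open>V(m)/m = 1/\<psi_B>(m) - m = 1/G(\<psi_B>(m))\<close>.
  Formula (i) off the diagonal is then algebra; on the diagonal \<open>k\<^sub>1(\<theta>\<^sub>1) = (M\<^sub>2 - M)/(\<theta>\<^sub>1M\<^sub>2)\<close> with
  \<open>M\<^sub>2(\<theta>) = \<integral> (1 - \<theta>x)\<^sup>-\<^sup>2 d\<nu> = G'(\<theta>)\<close>, and the derivative of \<open>V(m)/m\<close> is computed by the
  inverse function theorem from \<open>k' = (M\<^sub>2 - M\<^sup>2)/G\<^sup>2\<close>, which is positive because \<open>\<nu>\<close> is not a Dirac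
  mass. Both families are parametrised by the same \<open>\<theta>\<close>, which gives (iii). For (ii), \<open>M \<rightarrow> 1\<close> as
  \<open>\<theta> \<rightarrow> 0\<close> by dominated convergence, and as \<open>\<theta> \<rightarrow> \<theta>\<^sub>+\<close> the identity \<open>G(\<theta>) = G\<^sub>\<nu>(1/\<theta>)\<close> shows that
  \<open>k\<^sub>1(\<theta>)\<close> differs from the stated expression at \<open>b = 1/\<theta>\<close> by \<open>(k(\<theta>) - m\<^sub>+) G/(G - G(\<theta>\<^sub>1))\<close>,
  whose second factor stays bounded since \<open>G\<close> is strictly increasing.\<close>

lemma tendsto_integral_dominated_within:
  fixes s :: "real \<Rightarrow> 'a \<Rightarrow> real" and f :: "'a \<Rightarrow> real"
  assumes "finite_measure M"
    and meas: "\<And>t. t \<in> S \<Longrightarrow> s t \<in> borel_measurable M"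
    and f_meas: "f \<in> borel_measurable M"
    and lim: "AE x in M. ((\<lambda>t. s t x) \<longlongrightarrow> f x) (at t0 within S)"
    and bound: "\<And>t. t \<in> S \<Longrightarrow> AE x in M. norm (s t x) \<le> C"
  shows "((\<lambda>t. integral\<^sup>L M (s t)) \<longlongrightarrow> integral\<^sup>L M f) (at t0 within S)"
proof -
  interpret finite_measure M by fact
  show ?thesis unfolding tendsto_at_iff_sequentially comp_def
  proof (intro allI impI)
    fix X :: "nat \<Rightarrow> real" assume X: "\<forall>i. X i \<in> S - {t0}" "X \<longlonglongrightarrow> t0"
    then have X_lim: "filterlim X (at t0 within S) sequentially"
      by (auto simp: filterlim_at intro!: always_eventually)
    show "(\<lambda>i. integral\<^sup>L M (s (X i))) \<longlonglongrightarrow> integral\<^sup>L M f"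
    proof (rule integral_dominated_convergence[where w="\<lambda>_. C"])
      show "AE x in M. (\<lambda>i. s (X i) x) \<longlonglongrightarrow> f x" using lim
        by eventually_elim (rule filterlim_compose[OF _ X_lim])
    qed (use X meas bound f_meas in auto)
  qed
qed

lemma real_divide_mult_form:
  fixes m m1 r r1 :: real
  assumes "m \<noteq> 0" "m1 \<noteq> 0"
  shows "(m * r1 - m1 * r) / (r1 - r)
       = (m\<^sup>2 * (m1 * r1) - m1\<^sup>2 * (m * r)) / (m * (m1 * r1) - m1 * (m * r))"
proof -
  have "m\<^sup>2 * (m1 * r1) - m1\<^sup>2 * (m * r) = (m * m1) * (m * r1 - m1 * r)"
       "m * (m1 * r1) - m1 * (m * r) = (m * m1) * (r1 - r)"
    by (simp_all add: algebra_simps power2_eq_square)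
  then show ?thesis using assms by simp
qed

lemma real_diag_mult_form:
  fixes m r W :: real
  assumes "m \<noteq> 0" "W \<noteq> 0"
  shows "m - r / W = (2 * m * (m * r) - m\<^sup>2 * (r + m * W)) / (m * r - m * (r + m * W))"
proof -
  have "2 * m * (m * r) - m\<^sup>2 * (r + m * W) = m\<^sup>2 * (r - m * W)"
       "m * r - m * (r + m * W) = - (m\<^sup>2 * W)"
    by (simp_all add: algebra_simps power2_eq_square)
  then show ?thesis using assms by (simp add: field_simps)
qed

lemma real_mean_of_quotient:
  fixes s t a b :: real
  assumes "s \<noteq> 0" "t - s \<noteq> 0" "a \<noteq> 0" "t * a - s * b \<noteq> 0"
  shows "((t * a - s * b) / ((t - s) * a) - 1) / (s * ((t * a - s * b) / ((t - s) * a)))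
       = (a - b) / (t * a - s * b)"
proof -
  define D where "D = (t - s) * a"
  have D: "D \<noteq> 0" using assms by (simp add: D_def)
  have "(t * a - s * b) / D - 1 = s * (a - b) / D"
    using D by (simp add: field_simps D_def)
  moreover have "(s * (a - b) / D) / (s * ((t * a - s * b) / D)) = (a - b) / (t * a - s * b)"
    using D assms by (simp add: field_simps)
  ultimately show ?thesis unfolding D_def[symmetric] by simp
qed

lemma real_cross_quotient:
  fixes a b g h :: real
  assumes "g \<noteq> 0" "h \<noteq> 0" "g \<noteq> h"
  shows "(b - a) / (h - g) = ((a - 1) / g * (1 / h) - (b - 1) / h * (1 / g)) / (1 / h - 1 / g)"
proof -
  have "h - g \<noteq> 0" using assms by simp
  then show ?thesis using assms by (simp add: field_simps)
qed

lemma real_diag_quotient: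
  fixes t a M :: real
  assumes "0 < t" "0 < a" "a\<^sup>2 < M"
  shows "(M - a) / (t * M) = (a - 1) / (t * a) - 1 / (t * a) / (- M / (M - a\<^sup>2))"
proof -
  have "0 < M" "M - a\<^sup>2 \<noteq> 0" using assms by (smt (verit) zero_le_power2)+
  then show ?thesis using assms by (simp add: field_simps power2_eq_square)
qed

lemma Gf_eq_Mf: "b \<noteq> 0 \<Longrightarrow> Gf \<mu> b = 1 / b * Mf \<mu> (1 / b)"
proof -
  assume "b \<noteq> 0"
  then have "Gf \<mu> b = (\<integral>x. 1 / b * (1 / (1 - 1 / b * x)) \<partial>\<mu>)"
    unfolding Gf_def by (intro Bochner_Integration.integral_cong) (auto simp: field_simps)
  then show ?thesis unfolding Mf_def by (simp only: integral_mult_right_zero)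
qed

text \<open>\<open>B\<close> is only required to be an a.e. upper bound, not \<open>Bnd \<mu>\<close>, so that the locale is inherited
  by every member \<open>Pf \<mu> t\<close> of the family.\<close>

locale cs_generator =
  fixes \<mu> :: "real measure" and B :: real
  assumes prob: "prob_space \<mu>" and sets_eq_borel: "sets \<mu> = sets borel"
    and bound_nonneg: "0 \<le> B" and AE_le_bound: "AE x in \<mu>. x \<le> B"
    and nondegenerate: "\<And>c. \<not> (AE x in \<mu>. x = c)"

sublocale cs_generator \<subseteq> P: prob_space \<mu> by (rule prob)

context cs_generator begin

definition Theta_B :: "real set"
  where "Theta_B = {t. 0 < t \<and> t * B < 1}"

definition theta_plus_B :: "real filter"
  where "theta_plus_B = (if B = 0 then at_top else at_left (1 / B))"

definition M2 :: "real \<Rightarrow> real"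
  where "M2 t = (\<integral>x. (1 / (1 - t * x))\<^sup>2 \<partial>\<mu>)"

definition psi_B :: "real \<Rightarrow> real"
  where "psi_B = the_inv_into Theta_B (kf \<mu>)"

definition Vratio_B :: "real \<Rightarrow> real"
  where "Vratio_B m = 1 / psi_B m - m"

lemma measurable_from_borel: "f \<in> borel_measurable borel \<Longrightarrow> f \<in> borel_measurable \<mu>"
  by (metis measurable_cong_sets sets_eq_borel)

lemma kernel_measurable: "(\<lambda>x. 1 / (1 - t * x)) \<in> borel_measurable \<mu>"
  by (rule measurable_from_borel) measurable

lemma AE_kernel_bounds:
  assumes "0 \<le> t" "t * B < 1"
  shows "AE x in \<mu>. 0 < 1 - t * x \<and> 0 < 1 / (1 - t * x) \<and> 1 / (1 - t * x) \<le> 1 / (1 - t * B)"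
  using AE_le_bound
proof eventually_elim
  case (elim x)
  have "t * x \<le> t * B" using elim assms by (simp add: mult_left_mono)
  then show ?case using assms by (auto simp: field_simps)
qed

lemma integrable_kernel:
  assumes "0 \<le> t" "t * B < 1"
  shows "integrable \<mu> (\<lambda>x. 1 / (1 - t * x))"
  by (rule P.integrable_const_bound[where B="1 / (1 - t * B)"])
    (use AE_kernel_bounds[OF assms] in \<open>auto intro: kernel_measurable elim: AE_mp\<close>)

lemma integrable_kernel_sq:
  assumes "0 \<le> t" "t * B < 1"
  shows "integrable \<mu> (\<lambda>x. (1 / (1 - t * x))\<^sup>2)"
proof (rule P.integrable_const_bound[where B="(1 / (1 - t * B))\<^sup>2"])
  show "AE x in \<mu>. norm ((1 / (1 - t * x))\<^sup>2) \<le> (1 / (1 - t * B))\<^sup>2"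
    using AE_kernel_bounds[OF assms] by eventually_elim (simp add: power_mono)
qed (rule measurable_from_borel, measurable)

lemma Mf_pos:
  assumes "0 \<le> t" "t * B < 1"
  shows "0 < Mf \<mu> t"
proof -
  have ae: "AE x in \<mu>. 0 < 1 / (1 - t * x)"
    using AE_kernel_bounds[OF assms] by eventually_elim auto
  have "0 \<le> Mf \<mu> t" unfolding Mf_def
    by (rule integral_nonneg_AE) (use ae in \<open>eventually_elim, auto\<close>)
  moreover have "Mf \<mu> t \<noteq> 0"
  proof
    assume "Mf \<mu> t = 0"
    moreover have "AE x in \<mu>. 0 \<le> 1 / (1 - t * x)" using ae by eventually_elim simp
    ultimately have "AE x in \<mu>. 1 / (1 - t * x) = 0"
      using integral_nonneg_eq_0_iff_AE[OF integrable_kernel[OF assms]] unfolding Mf_def by simp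
    with ae have "AE x in \<mu>. False" by eventually_elim auto
    then show False by (simp add: P.AE_False)
  qed
  ultimately show ?thesis by simp
qed

lemma Mf_le:
  assumes "0 \<le> t" "t * B < 1"
  shows "Mf \<mu> t \<le> 1 / (1 - t * B)"
proof -
  have "Mf \<mu> t \<le> (\<integral>x. 1 / (1 - t * B) \<partial>\<mu>)" unfolding Mf_def
    by (rule integral_mono_AE[OF integrable_kernel[OF assms]])
      (use AE_kernel_bounds[OF assms] in \<open>auto elim: AE_mp\<close>)
  then show ?thesis by (simp add: P.prob_space)
qed

lemma Theta_B_nonneg: "t \<in> Theta_B \<Longrightarrow> 0 \<le> t" and Theta_B_bound: "t \<in> Theta_B \<Longrightarrow> t * B < 1"
  by (auto simp: Theta_B_def)

lemma Theta_B_downward_closed: "s \<in> Theta_B \<Longrightarrow> 0 < r \<Longrightarrow> r \<le> s \<Longrightarrow> r \<in> Theta_B"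
  using bound_nonneg by (auto simp: Theta_B_def) (smt (verit) mult_right_mono)

lemma open_Theta_B: "open Theta_B"
proof -
  have "Theta_B = {t. 0 < t} \<inter> {t. t * B < 1}" by (auto simp: Theta_B_def)
  then show ?thesis by (auto intro!: open_Int open_Collect_less continuous_intros)
qed

lemma Theta_B_nonempty: "1 / (2 * (B + 1)) \<in> Theta_B"
  using bound_nonneg by (auto simp: Theta_B_def field_simps)

lemma AE_kernel_le:
  assumes "s \<in> Theta_B" "0 \<le> r" "r \<le> s"
  shows "AE x in \<mu>. 0 < 1 / (1 - r * x) \<and> 1 / (1 - r * x) \<le> 1 / (1 - s * B)"
proof -
  have "r * B \<le> s * B" using assms bound_nonneg by (simp add: mult_right_mono)
  then have r: "r * B < 1" and le: "1 / (1 - r * B) \<le> 1 / (1 - s * B)"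
    using Theta_B_bound[OF assms(1)] by (auto simp: field_simps)
  show ?thesis
    using AE_kernel_bounds[OF assms(2) r] by eventually_elim (use le in auto)
qed

lemma kf_le_bound: "t \<in> Theta_B \<Longrightarrow> kf \<mu> t \<le> B"
  using Mf_pos[of t] Mf_le[of t] by (auto simp: Theta_B_def kf_def field_simps)

lemma kf_eq_inverse: "t \<in> Theta_B \<Longrightarrow> kf \<mu> t = inverse t - inverse (t * Mf \<mu> t)"
  using Mf_pos[of t] by (auto simp: Theta_B_def kf_def field_simps)

text \<open>Partial fractions: \<open>1/((1 - sx)(1 - tx)) = (s/(1 - sx) - t/(1 - tx))/(s - t)\<close>.\<close>

lemma integral_kernel_product:
  assumes s: "0 \<le> s" "s * B < 1" and t: "0 \<le> t" "t * B < 1" and "s \<noteq> t"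
  shows "(\<integral>x. 1 / (1 - s * x) * (1 / (1 - t * x)) \<partial>\<mu>) = (s * Mf \<mu> s - t * Mf \<mu> t) / (s - t)"
proof -
  have "(\<integral>x. 1 / (1 - s * x) * (1 / (1 - t * x)) \<partial>\<mu>)
      = (\<integral>x. (s * (1 / (1 - s * x)) - t * (1 / (1 - t * x))) / (s - t) \<partial>\<mu>)"
  proof (rule integral_cong_AE)
    show "AE x in \<mu>. 1 / (1 - s * x) * (1 / (1 - t * x))
        = (s * (1 / (1 - s * x)) - t * (1 / (1 - t * x))) / (s - t)"
      using AE_kernel_bounds[OF s] AE_kernel_bounds[OF t]
    proof eventually_elim
      case (elim x)
      then have "1 - s * x \<noteq> 0" "1 - t * x \<noteq> 0" "s - t \<noteq> 0" using \<open>s \<noteq> t\<close> by auto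
      then show ?case by (simp add: divide_simps) (simp add: algebra_simps)
    qed
  qed (rule measurable_from_borel, measurable)+
  also have "\<dots> = ((\<integral>x. s * (1 / (1 - s * x)) \<partial>\<mu>) - (\<integral>x. t * (1 / (1 - t * x)) \<partial>\<mu>)) / (s - t)"
    by (simp only: integral_divide_zero Bochner_Integration.integral_diff
        integrable_mult_right[OF integrable_kernel[OF s]] integrable_mult_right[OF integrable_kernel[OF t]])
  also have "\<dots> = (s * Mf \<mu> s - t * Mf \<mu> t) / (s - t)"
    by (simp only: Mf_def integral_mult_right_zero)
  finally show ?thesis .
qed

lemma Mf_sq_less_M2:
  assumes "t \<in> Theta_B"
  shows "(Mf \<mu> t)\<^sup>2 < M2 t"
proof -
  note t = Theta_B_nonneg[OF assms] Theta_B_bound[OF assms]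
  define a where "a = Mf \<mu> t"
  define f where "f = (\<lambda>x. 1 / (1 - t * x))"
  have f_int: "integrable \<mu> f" "integrable \<mu> (\<lambda>x. (f x)\<^sup>2)"
    using integrable_kernel[OF t] integrable_kernel_sq[OF t] by (simp_all add: f_def)
  have expand: "(\<lambda>x. (f x - a)\<^sup>2) = (\<lambda>x. ((f x)\<^sup>2 - 2 * a * f x) + a\<^sup>2)"
    by (simp add: fun_eq_iff power2_diff algebra_simps)
  have int: "integrable \<mu> (\<lambda>x. (f x - a)\<^sup>2)"
    unfolding expand using f_int by (intro Bochner_Integration.integrable_add Bochner_Integration.integrable_diff
      integrable_mult_right P.integrable_const) auto
  have "(\<integral>x. (f x - a)\<^sup>2 \<partial>\<mu>) = (\<integral>x. (f x)\<^sup>2 \<partial>\<mu>) - 2 * a * (\<integral>x. f x \<partial>\<mu>) + a\<^sup>2"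
    unfolding expand using f_int by (simp add: P.prob_space)
  then have var: "(\<integral>x. (f x - a)\<^sup>2 \<partial>\<mu>) = M2 t - a\<^sup>2"
    by (simp add: M2_def a_def Mf_def f_def power2_eq_square)
  have "(\<integral>x. (f x - a)\<^sup>2 \<partial>\<mu>) \<noteq> 0"
  proof
    assume "(\<integral>x. (f x - a)\<^sup>2 \<partial>\<mu>) = 0"
    then have "AE x in \<mu>. (f x - a)\<^sup>2 = 0"
      using integral_nonneg_eq_0_iff_AE[OF int] by simp
    then have "AE x in \<mu>. x = (a - 1) / (a * t)"
      using AE_kernel_bounds[OF t]
    proof eventually_elim
      case (elim x)
      then have "1 = a * (1 - t * x)" by (simp add: f_def field_simps)
      then show ?case using Mf_pos[OF t] assms by (simp add: a_def Theta_B_def field_simps)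
    qed
    then show False using nondegenerate by blast
  qed
  moreover have "0 \<le> (\<integral>x. (f x - a)\<^sup>2 \<partial>\<mu>)" by simp
  ultimately show ?thesis using var unfolding a_def by linarith
qed

lemma M2_pos: "t \<in> Theta_B \<Longrightarrow> 0 < M2 t"
  using Mf_sq_less_M2[of t] by (smt (verit) zero_le_power2)

lemma tendsto_integral_kernel_product:
  assumes "t \<in> Theta_B"
  shows "((\<lambda>s. \<integral>x. 1 / (1 - s * x) * (1 / (1 - t * x)) \<partial>\<mu>) \<longlongrightarrow> M2 t) (at t)"
proof -
  note t = Theta_B_nonneg[OF assms] Theta_B_bound[OF assms]
  obtain t' where "t < t'" "{t..<t'} \<subseteq> Theta_B"
    using open_right[OF open_Theta_B assms, of "t + 1"] by auto
  define u where "u = (t + t') / 2"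
  have u: "u \<in> Theta_B" "t < u" using \<open>t < t'\<close> \<open>{t..<t'} \<subseteq> Theta_B\<close> by (auto simp: u_def)
  have "((\<lambda>s. \<integral>x. 1 / (1 - s * x) * (1 / (1 - t * x)) \<partial>\<mu>) \<longlongrightarrow> (\<integral>x. (1 / (1 - t * x))\<^sup>2 \<partial>\<mu>))
         (at t within {0<..<u})"
  proof (rule tendsto_integral_dominated_within[where C="1 / (1 - u * B) * (1 / (1 - t * B))"])
    show "AE x in \<mu>. ((\<lambda>s. 1 / (1 - s * x) * (1 / (1 - t * x))) \<longlongrightarrow> (1 / (1 - t * x))\<^sup>2)
            (at t within {0<..<u})"
      using AE_kernel_bounds[OF t]
      by eventually_elim (auto intro!: tendsto_eq_intros simp: power2_eq_square)
    show "AE x in \<mu>. norm (1 / (1 - s * x) * (1 / (1 - t * x))) \<le> 1 / (1 - u * B) * (1 / (1 - t * B))"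
      if "s \<in> {0<..<u}" for s
    proof -
      have "0 \<le> s" "s \<le> u" using that by auto
      from AE_kernel_le[OF u(1) this] AE_kernel_bounds[OF t] show ?thesis
      proof eventually_elim
        case (elim x)
        then have "1 / (1 - s * x) * (1 / (1 - t * x)) \<le> 1 / (1 - u * B) * (1 / (1 - t * B))"
          by (intro mult_mono) (use Theta_B_bound[OF u(1)] in auto)
        then show ?case using elim by simp
      qed
    qed
  qed (auto intro: measurable_from_borel P.finite_measure_axioms)
  moreover have "at t within {0<..<u} = at t"
    by (rule at_within_open) (use u t assms in \<open>auto simp: Theta_B_def\<close>)
  ultimately show ?thesis by (simp add: M2_def)
qed

lemma has_real_derivative_G:
  assumes "t \<in> Theta_B"
  shows "((\<lambda>s. s * Mf \<mu> s) has_real_derivative M2 t) (at t)"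
proof -
  define \<phi> where "\<phi> z = (if z = t then M2 t else (z * Mf \<mu> z - t * Mf \<mu> t) / (z - t))" for z
  have "(\<phi> \<longlongrightarrow> M2 t) (at t)"
  proof (rule Lim_transform_eventually[OF tendsto_integral_kernel_product[OF assms]])
    show "\<forall>\<^sub>F s in at t. (\<integral>x. 1 / (1 - s * x) * (1 / (1 - t * x)) \<partial>\<mu>) = \<phi> s"
      using eventually_at_in_open[OF open_Theta_B assms]
    proof eventually_elim
      case (elim s)
      then have "s \<in> Theta_B" "s \<noteq> t" by auto
      with integral_kernel_product[OF Theta_B_nonneg Theta_B_bound Theta_B_nonneg Theta_B_bound, OF this(1,1) assms assms]
      show ?case by (simp add: \<phi>_def)
    qed
  qed
  then have "isCont \<phi> t" by (simp add: isCont_def \<phi>_def)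
  then show ?thesis unfolding CARAT_DERIV by (intro exI[of _ \<phi>]) (auto simp: \<phi>_def)
qed

definition kf_deriv :: "real \<Rightarrow> real"
  where "kf_deriv t = (M2 t - (Mf \<mu> t)\<^sup>2) / (t * Mf \<mu> t)\<^sup>2"

lemma kf_deriv_pos: "t \<in> Theta_B \<Longrightarrow> 0 < kf_deriv t"
  using Mf_sq_less_M2[of t] Mf_pos[of t] by (simp add: kf_deriv_def Theta_B_def)

lemma has_real_derivative_kf:
  assumes "t \<in> Theta_B"
  shows "(kf \<mu> has_real_derivative kf_deriv t) (at t)"
proof -
  have t: "t \<noteq> 0" "t * Mf \<mu> t \<noteq> 0" using assms Mf_pos[of t] by (auto simp: Theta_B_def)
  have "((\<lambda>s. inverse s - inverse (s * Mf \<mu> s)) has_real_derivative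
         - (inverse t ^ 2) - - (M2 t * inverse ((t * Mf \<mu> t) ^ 2))) (at t)"
    using DERIV_diff[OF DERIV_inverse[OF t(1)] DERIV_inverse_fun[OF has_real_derivative_G[OF assms] t(2)]]
    by (simp add: numeral_2_eq_2)
  moreover have "- (inverse t ^ 2) - - (M2 t * inverse ((t * Mf \<mu> t) ^ 2)) = kf_deriv t"
    using t by (simp add: kf_deriv_def field_simps power2_eq_square)
  moreover have "\<forall>\<^sub>F s in nhds t. kf \<mu> s = inverse s - inverse (s * Mf \<mu> s)"
    using eventually_nhds_in_open[OF open_Theta_B assms] by eventually_elim (rule kf_eq_inverse)
  ultimately show ?thesis using DERIV_cong_ev[OF refl _ refl] by metis
qed

lemma strict_mono_on_Theta_B:
  assumes deriv: "\<And>x. x \<in> Theta_B \<Longrightarrow> \<exists>y. (f has_real_derivative y) (at x) \<and> 0 < y"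
    and "s \<in> Theta_B" "t \<in> Theta_B" "s < t"
  shows "f s < f t"
proof (rule DERIV_pos_imp_increasing[OF \<open>s < t\<close>])
  fix x assume "s \<le> x" "x \<le> t"
  moreover have "0 < s" using \<open>s \<in> Theta_B\<close> by (simp add: Theta_B_def)
  ultimately have "x \<in> Theta_B" by (intro Theta_B_downward_closed[OF \<open>t \<in> Theta_B\<close>]) auto
  then show "\<exists>y. (f has_real_derivative y) (at x) \<and> 0 < y" by (rule deriv)
qed

lemma kf_strict_mono:
  assumes "s \<in> Theta_B" "t \<in> Theta_B" "s < t"
  shows "kf \<mu> s < kf \<mu> t"
  using has_real_derivative_kf kf_deriv_pos by (intro strict_mono_on_Theta_B[OF _ assms]) blast

lemma G_strict_mono:
  assumes "s \<in> Theta_B" "t \<in> Theta_B" "s < t"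
  shows "s * Mf \<mu> s < t * Mf \<mu> t"
  using has_real_derivative_G M2_pos by (intro strict_mono_on_Theta_B[OF _ assms]) blast

lemma inj_on_kf: "inj_on (kf \<mu>) Theta_B"
proof (rule inj_onI)
  fix s t assume "s \<in> Theta_B" "t \<in> Theta_B" "kf \<mu> s = kf \<mu> t"
  then show "s = t"
    using kf_strict_mono[of s t] kf_strict_mono[of t s] by (cases s t rule: linorder_cases) auto
qed

lemma G_neq: "s \<in> Theta_B \<Longrightarrow> t \<in> Theta_B \<Longrightarrow> s \<noteq> t \<Longrightarrow> s * Mf \<mu> s \<noteq> t * Mf \<mu> t"
  using G_strict_mono[of s t] G_strict_mono[of t s] by (cases s t rule: linorder_cases) auto

lemma tendsto_Mf_at_right_0: "(Mf \<mu> \<longlongrightarrow> 1) (at_right 0)"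
proof -
  define c where "c = 1 / (2 * (B + 1))"
  have c: "c \<in> Theta_B" "0 < c" using Theta_B_nonempty by (auto simp: c_def Theta_B_def)
  have "(Mf \<mu> \<longlongrightarrow> (\<integral>x. 1 \<partial>\<mu>)) (at 0 within {0<..<c})"
    unfolding Mf_def
  proof (rule tendsto_integral_dominated_within[where C="1 / (1 - c * B)"])
    show "AE x in \<mu>. ((\<lambda>s. 1 / (1 - s * x)) \<longlongrightarrow> 1) (at 0 within {0<..<c})"
      by (intro AE_I2) (auto intro!: tendsto_eq_intros)
    show "AE x in \<mu>. norm (1 / (1 - s * x)) \<le> 1 / (1 - c * B)" if "s \<in> {0<..<c}" for s
      using AE_kernel_le[OF c(1), of s] that by (auto elim: AE_mp)
  qed (auto intro: kernel_measurable P.finite_measure_axioms)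
  moreover have "at (0::real) within {0<..<c} = at_right 0"
    by (rule at_within_nhd[of 0 "{-c<..<c}"]) (use c in auto)
  ultimately show ?thesis by (simp add: P.prob_space)
qed

lemma theta_plus_B_nontrivial: "theta_plus_B \<noteq> bot"
  unfolding theta_plus_B_def by auto

lemma eventually_theta_plus_B:
  assumes "t0 \<in> Theta_B"
  shows "eventually (\<lambda>t. t \<in> Theta_B \<and> t0 < t) theta_plus_B"
proof (cases "B = 0")
  case True
  then show ?thesis using assms unfolding theta_plus_B_def Theta_B_def
    by (auto intro: eventually_mono[OF eventually_gt_at_top[of t0]])
next
  case False
  then have B: "0 < B" using bound_nonneg by auto
  have "0 < t0" "t0 < 1 / B" using assms B by (auto simp: Theta_B_def field_simps)
  then have "eventually (\<lambda>t. t \<in> {t0<..<1/B}) (at_left (1 / B))" by (intro eventually_at_left_real)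
  then show ?thesis using False \<open>0 < t0\<close> B unfolding theta_plus_B_def Theta_B_def
    by (auto elim!: eventually_mono simp: field_simps)
qed

lemma tendsto_Sup_theta_plus_B:
  fixes f :: "real \<Rightarrow> real"
  assumes mono: "\<And>s t. s \<in> Theta_B \<Longrightarrow> t \<in> Theta_B \<Longrightarrow> s < t \<Longrightarrow> f s < f t"
    and bound: "\<And>t. t \<in> Theta_B \<Longrightarrow> f t \<le> C"
  shows "(f \<longlongrightarrow> Sup (f ` Theta_B)) theta_plus_B"
proof (rule order_tendstoI)
  have bdd: "bdd_above (f ` Theta_B)" using bound by (auto intro!: bdd_aboveI)
  fix y assume "y < Sup (f ` Theta_B)"
  then obtain t0 where t0: "t0 \<in> Theta_B" "y < f t0"
    using less_cSup_iff[OF _ bdd] Theta_B_nonempty by auto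
  show "eventually (\<lambda>t. y < f t) theta_plus_B"
    using eventually_theta_plus_B[OF t0(1)] by eventually_elim (use t0 mono in force)
next
  have bdd: "bdd_above (f ` Theta_B)" using bound by (auto intro!: bdd_aboveI)
  fix y assume y: "Sup (f ` Theta_B) < y"
  show "eventually (\<lambda>t. f t < y) theta_plus_B"
    using eventually_theta_plus_B[OF Theta_B_nonempty]
    by eventually_elim (use bdd y in \<open>meson cSup_upper image_eqI le_less_trans\<close>)
qed

lemma tendsto_kf_theta_plus_B: "(kf \<mu> \<longlongrightarrow> Sup (kf \<mu> ` Theta_B)) theta_plus_B"
  by (rule tendsto_Sup_theta_plus_B[where C=B]) (auto intro: kf_strict_mono kf_le_bound)

lemma filterlim_inverse_theta_plus_B: "filterlim (\<lambda>b. 1 / b) theta_plus_B (at_right B)"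
proof (cases "B = 0")
  case True
  then have "theta_plus_B = at_top" unfolding theta_plus_B_def by simp
  then show ?thesis
    using filterlim_inverse_at_top_right True by (simp add: inverse_eq_divide)
next
  case False
  then have B: "0 < B" using bound_nonneg by simp
  have "\<forall>\<^sub>F b in at_right B. 1 / b \<in> {..<1 / B} \<and> 1 / b \<noteq> 1 / B"
    using eventually_at_right_real[of B "B + 1", OF less_add_one]
  proof eventually_elim
    case (elim b)
    then have "1 / b < 1 / B" using B by (intro divide_strict_left_mono) auto
    then show ?case by auto
  qed
  moreover have "((\<lambda>b. 1 / b) \<longlongrightarrow> 1 / B) (at_right B)"
    using B by (intro tendsto_intros) auto
  ultimately show ?thesis using False by (simp add: theta_plus_B_def filterlim_at)
qed

lemma psi_B_kf: "s \<in> Theta_B \<Longrightarrow> psi_B (kf \<mu> s) = s"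
  unfolding psi_B_def by (rule the_inv_into_f_f[OF inj_on_kf])

lemma Vratio_B_kf: "s \<in> Theta_B \<Longrightarrow> Vratio_B (kf \<mu> s) = 1 / (s * Mf \<mu> s)"
proof -
  assume s: "s \<in> Theta_B"
  have "0 < s" "0 < Mf \<mu> s" using s Mf_pos[of s] by (auto simp: Theta_B_def)
  have "Vratio_B (kf \<mu> s) = 1 / s - kf \<mu> s" by (simp add: Vratio_B_def psi_B_kf[OF s])
  also have "\<dots> = 1 / (s * Mf \<mu> s)" using \<open>0 < s\<close> \<open>0 < Mf \<mu> s\<close> by (simp add: kf_def field_simps)
  finally show ?thesis .
qed

lemma has_real_derivative_psi_B:
  assumes "t \<in> Theta_B"
  shows "(psi_B has_real_derivative inverse (kf_deriv t)) (at (kf \<mu> t))"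
  unfolding has_field_derivative_def
proof (rule has_derivative_inverse_strong[OF open_Theta_B assms])
  show "continuous_on Theta_B (kf \<mu>)"
    using has_real_derivative_kf by (meson DERIV_isCont continuous_at_imp_continuous_on)
  show "(kf \<mu> has_derivative (*) (kf_deriv t)) (at t)"
    using has_real_derivative_kf[OF assms] by (simp add: has_field_derivative_def)
  show "(*) (kf_deriv t) \<circ> (*) (inverse (kf_deriv t)) = id"
    using kf_deriv_pos[OF assms] by (auto simp: fun_eq_iff)
qed (rule psi_B_kf)

lemma has_real_derivative_Vratio_B:
  assumes "t \<in> Theta_B"
  shows "(Vratio_B has_real_derivative - M2 t / (M2 t - (Mf \<mu> t)\<^sup>2)) (at (kf \<mu> t))"
proof -
  have t: "0 < t" "0 < Mf \<mu> t" "(Mf \<mu> t)\<^sup>2 < M2 t"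
    using assms Mf_pos[of t] Mf_sq_less_M2[OF assms] by (auto simp: Theta_B_def)
  have "((\<lambda>m. inverse (psi_B m) - m) has_real_derivative
          - (inverse (kf_deriv t) * inverse (t ^ 2)) - 1) (at (kf \<mu> t))"
    using DERIV_diff[OF DERIV_inverse_fun[OF has_real_derivative_psi_B[OF assms]] DERIV_ident] t
    by (simp add: psi_B_kf[OF assms] numeral_2_eq_2)
  moreover have "- (inverse (kf_deriv t) * inverse (t ^ 2)) - 1 = - M2 t / (M2 t - (Mf \<mu> t)\<^sup>2)"
    using t by (simp add: kf_deriv_def field_simps power2_eq_square)
  ultimately show ?thesis by (simp add: Vratio_B_def[abs_def] inverse_eq_divide)
qed

lemma Pf_eq_density:
  assumes "t \<in> Theta_B"
  shows "Pf \<mu> t = density \<mu> (\<lambda>x. ennreal (1 / Mf \<mu> t * (1 / (1 - t * x))))"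
  unfolding Pf_def by (simp add: divide_divide_eq_left)

lemma AE_Pf_density_pos:
  assumes "t \<in> Theta_B"
  shows "AE x in \<mu>. 0 < 1 / Mf \<mu> t * (1 / (1 - t * x))"
  using AE_kernel_bounds[OF Theta_B_nonneg Theta_B_bound, OF assms assms]
  by eventually_elim (use Mf_pos[OF Theta_B_nonneg Theta_B_bound, OF assms assms] in simp)

lemma cs_generator_Pf:
  assumes t: "t \<in> Theta_B"
  shows "cs_generator (Pf \<mu> t) B"
proof (rule cs_generator.intro)
  define h where "h x = 1 / Mf \<mu> t * (1 / (1 - t * x))" for x
  have Pf: "Pf \<mu> t = density \<mu> (\<lambda>x. ennreal (h x))"
    unfolding Pf_eq_density[OF t] h_def ..
  have h_meas: "h \<in> borel_measurable \<mu>" unfolding h_def by (rule measurable_from_borel) measurable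
  have h_pos: "AE x in \<mu>. 0 < h x" using AE_Pf_density_pos[OF t] by (simp add: h_def)
  show "prob_space (Pf \<mu> t)"
  proof (rule prob_spaceI)
    have "emeasure (Pf \<mu> t) (space (Pf \<mu> t)) = (\<integral>\<^sup>+ x. ennreal (h x) * indicator (space \<mu>) x \<partial>\<mu>)"
      unfolding Pf using h_meas by (simp add: emeasure_density)
    also have "\<dots> = (\<integral>\<^sup>+ x. ennreal (h x) \<partial>\<mu>)"
      by (rule nn_integral_cong) simp
    also have "\<dots> = ennreal (\<integral>x. h x \<partial>\<mu>)"
    proof (rule nn_integral_eq_integral)
      show "integrable \<mu> h" unfolding h_def
        by (intro integrable_mult_right integrable_kernel Theta_B_nonneg[OF t] Theta_B_bound[OF t])
      show "AE x in \<mu>. 0 \<le> h x" using h_pos by eventually_elim simp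
    qed
    also have "(\<integral>x. h x \<partial>\<mu>) = 1 / Mf \<mu> t * Mf \<mu> t"
      unfolding h_def Mf_def by (rule integral_mult_right_zero)
    also have "\<dots> = 1" using Mf_pos[OF Theta_B_nonneg Theta_B_bound, OF t t] by simp
    finally show "emeasure (Pf \<mu> t) (space (Pf \<mu> t)) = 1" by simp
  qed
  show "sets (Pf \<mu> t) = sets borel" unfolding Pf using sets_eq_borel by simp
  show "0 \<le> B" by (rule bound_nonneg)
  show "AE x in Pf \<mu> t. x \<le> B" unfolding Pf using h_meas AE_le_bound
    by (subst AE_density) (auto elim: AE_mp)
  show "\<not> (AE x in Pf \<mu> t. x = c)" for c
  proof
    assume "AE x in Pf \<mu> t. x = c"
    then have "AE x in \<mu>. 0 < ennreal (h x) \<longrightarrow> x = c" unfolding Pf using h_meas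
      by (subst (asm) AE_density) auto
    with h_pos have "AE x in \<mu>. x = c" by eventually_elim auto
    then show False using nondegenerate by blast
  qed
qed

lemma Mf_Pf:
  assumes t: "t \<in> Theta_B" and s: "0 \<le> s" "s * B < 1"
  shows "Mf (Pf \<mu> t) s = (\<integral>x. 1 / (1 - t * x) * (1 / (1 - s * x)) \<partial>\<mu>) / Mf \<mu> t"
proof -
  have nonneg: "AE x in \<mu>. 0 \<le> 1 / Mf \<mu> t * (1 / (1 - t * x))"
    using AE_Pf_density_pos[OF t] by eventually_elim (rule less_imp_le)
  have "Mf (Pf \<mu> t) s = (\<integral>x. (1 / Mf \<mu> t * (1 / (1 - t * x))) *\<^sub>R (1 / (1 - s * x)) \<partial>\<mu>)"
    unfolding Mf_def[of "Pf \<mu> t"] unfolding Pf_eq_density[OF t]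
    by (rule integral_density[OF kernel_measurable _ nonneg]) (rule measurable_from_borel, measurable)
  also have "\<dots> = (\<integral>x. 1 / Mf \<mu> t * (1 / (1 - t * x) * (1 / (1 - s * x))) \<partial>\<mu>)"
    by (simp only: real_scaleR_def mult.assoc)
  also have "\<dots> = 1 / Mf \<mu> t * (\<integral>x. 1 / (1 - t * x) * (1 / (1 - s * x)) \<partial>\<mu>)"
    by (rule integral_mult_right_zero)
  finally show ?thesis by simp
qed

lemma kf_Pf:
  assumes s: "s \<in> Theta_B" and t: "t \<in> Theta_B" and "s \<noteq> t"
  shows "kf (Pf \<mu> t) s = (Mf \<mu> t - Mf \<mu> s) / (t * Mf \<mu> t - s * Mf \<mu> s)"
proof -
  note s' = Theta_B_nonneg[OF s] Theta_B_bound[OF s] and t' = Theta_B_nonneg[OF t] Theta_B_bound[OF t]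
  define a b where "a = Mf \<mu> t" and "b = Mf \<mu> s"
  have nz: "s \<noteq> 0" "t - s \<noteq> 0" "a \<noteq> 0" "t * a - s * b \<noteq> 0"
    using s \<open>s \<noteq> t\<close> Mf_pos[OF t'] G_neq[OF t s] by (auto simp: Theta_B_def a_def b_def)
  have "Mf (Pf \<mu> t) s = (t * a - s * b) / ((t - s) * a)"
    using Mf_Pf[OF t s'(1,2)] integral_kernel_product[OF t' s' not_sym[OF \<open>s \<noteq> t\<close>]]
    by (simp add: a_def b_def)
  then show ?thesis
    unfolding kf_def using real_mean_of_quotient[OF nz] by (simp add: a_def b_def)
qed

lemma kf_Pf_diag:
  assumes t: "t \<in> Theta_B"
  shows "kf (Pf \<mu> t) t = (M2 t - Mf \<mu> t) / (t * M2 t)"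
proof -
  note t' = Theta_B_nonneg[OF t] Theta_B_bound[OF t]
  have M: "Mf (Pf \<mu> t) t = M2 t / Mf \<mu> t"
    unfolding Mf_Pf[OF t t'] M2_def by (simp add: power2_eq_square)
  have "0 < t" "0 < Mf \<mu> t" "0 < M2 t" using t Mf_pos[OF t'] M2_pos[OF t] by (auto simp: Theta_B_def)
  then show ?thesis unfolding kf_def M by (simp add: field_simps)
qed

lemma the_inv_into_kf_Pf:
  assumes "s \<in> Theta_B" "t \<in> Theta_B"
  shows "the_inv_into Theta_B (kf (Pf \<mu> t)) (kf (Pf \<mu> t) s) = s"
proof -
  interpret Q: cs_generator "Pf \<mu> t" B by (rule cs_generator_Pf[OF assms(2)])
  show ?thesis by (rule the_inv_into_f_f[OF Q.inj_on_kf assms(1)])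
qed

lemma kf_Pf_Vratio_B:
  assumes s: "s \<in> Theta_B" and t: "t \<in> Theta_B" and "s \<noteq> t"
  shows "kf (Pf \<mu> t) s
       = (kf \<mu> s * Vratio_B (kf \<mu> t) - kf \<mu> t * Vratio_B (kf \<mu> s))
         / (Vratio_B (kf \<mu> t) - Vratio_B (kf \<mu> s))"
proof -
  have nz: "s * Mf \<mu> s \<noteq> 0" "t * Mf \<mu> t \<noteq> 0" "s * Mf \<mu> s \<noteq> t * Mf \<mu> t"
    using s t Mf_pos[of s] Mf_pos[of t] G_neq[OF s t \<open>s \<noteq> t\<close>] by (auto simp: Theta_B_def)
  show ?thesis
    unfolding kf_Pf[OF assms] Vratio_B_kf[OF s] Vratio_B_kf[OF t] unfolding kf_def
    by (rule real_cross_quotient[OF nz])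
qed

lemma kf_Pf_diag_Vratio_B:
  assumes t: "t \<in> Theta_B"
  shows "kf (Pf \<mu> t) t = kf \<mu> t - Vratio_B (kf \<mu> t) / deriv Vratio_B (kf \<mu> t)"
proof -
  have pos: "0 < t" "0 < Mf \<mu> t" "(Mf \<mu> t)\<^sup>2 < M2 t"
    using t Mf_pos[of t] Mf_sq_less_M2[OF t] by (auto simp: Theta_B_def)
  show ?thesis
    unfolding kf_Pf_diag[OF t] Vratio_B_kf[OF t] DERIV_imp_deriv[OF has_real_derivative_Vratio_B[OF t]]
    unfolding kf_def
    by (rule real_diag_quotient[OF pos])
qed

lemma tendsto_kf_Pf_at_right_0:
  assumes t: "t \<in> Theta_B"
  shows "(kf (Pf \<mu> t) \<longlongrightarrow> kf \<mu> t) (at_right 0)"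
proof -
  have pos: "0 < t" "0 < Mf \<mu> t" using t Mf_pos[of t] by (auto simp: Theta_B_def)
  have "((\<lambda>s. (Mf \<mu> t - Mf \<mu> s) / (t * Mf \<mu> t - s * Mf \<mu> s))
          \<longlongrightarrow> (Mf \<mu> t - 1) / (t * Mf \<mu> t - 0 * 1)) (at_right 0)"
    using pos by (intro tendsto_intros tendsto_Mf_at_right_0) auto
  moreover have "\<forall>\<^sub>F s in at_right 0.
      (Mf \<mu> t - Mf \<mu> s) / (t * Mf \<mu> t - s * Mf \<mu> s) = kf (Pf \<mu> t) s"
    using eventually_at_right_real[OF pos(1)]
  proof eventually_elim
    case (elim s)
    then have "s \<in> Theta_B" "s \<noteq> t" using Theta_B_downward_closed[OF t, of s] by auto
    then show ?case using kf_Pf[OF _ t] by simp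
  qed
  moreover have "(Mf \<mu> t - 1) / (t * Mf \<mu> t - 0 * 1) = kf \<mu> t" by (simp add: kf_def)
  ultimately show ?thesis using Lim_transform_eventually by metis
qed

lemma eventually_G_quotient_bounded:
  assumes t: "t \<in> Theta_B"
  obtains C where "\<forall>\<^sub>F s in theta_plus_B. s \<in> Theta_B \<and> t < s
      \<and> 0 < s * Mf \<mu> s - t * Mf \<mu> t \<and> \<bar>s * Mf \<mu> s / (s * Mf \<mu> s - t * Mf \<mu> t)\<bar> \<le> C"
proof -
  obtain t0 where t0: "t0 \<in> Theta_B" "t < t0"
    using eventually_happens'[OF theta_plus_B_nontrivial eventually_theta_plus_B[OF t]] by auto
  define c \<delta> where "c = t * Mf \<mu> t" and "\<delta> = t0 * Mf \<mu> t0 - c"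
  have c: "0 < c" using t Mf_pos[of t] by (simp add: c_def Theta_B_def)
  have \<delta>: "0 < \<delta>" using G_strict_mono[OF t t0] by (simp add: \<delta>_def c_def)
  show ?thesis
  proof (rule that[of "1 + c / \<delta>"])
    show "\<forall>\<^sub>F s in theta_plus_B. s \<in> Theta_B \<and> t < s
        \<and> 0 < s * Mf \<mu> s - t * Mf \<mu> t \<and> \<bar>s * Mf \<mu> s / (s * Mf \<mu> s - t * Mf \<mu> t)\<bar> \<le> 1 + c / \<delta>"
      using eventually_theta_plus_B[OF t0(1)]
    proof eventually_elim
      case (elim s)
      define G where "G = s * Mf \<mu> s"
      have gap: "\<delta> < G - c" using G_strict_mono[OF t0(1) _ ] elim by (simp add: G_def \<delta>_def)
      then have "\<bar>G / (G - c)\<bar> = 1 + c / (G - c)" using c \<delta> by (simp add: field_simps)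
      also have "\<dots> \<le> 1 + c / \<delta>" using c \<delta> gap by (simp add: frac_le)
      finally show ?case using elim t0 gap \<delta> by (simp add: G_def c_def)
    qed
  qed
qed

lemma kf_Pf_minus_quotient:
  assumes s: "s \<in> Theta_B" and t: "t \<in> Theta_B" and "s \<noteq> t"
  defines "G \<equiv> s * Mf \<mu> s" and "c \<equiv> t * Mf \<mu> t"
  shows "kf (Pf \<mu> t) s - (S * Gf \<mu> (1 / s) - kf \<mu> t * c) / (Gf \<mu> (1 / s) - c)
       = (kf \<mu> s - S) * (G / (G - c))"
proof -
  have pos: "0 < s" "0 < Mf \<mu> s" "0 < t" "0 < Mf \<mu> t"
    using s t Mf_pos[of s] Mf_pos[of t] by (auto simp: Theta_B_def)
  have "kf (Pf \<mu> t) s = (Mf \<mu> t - Mf \<mu> s) / (c - G)"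
    using kf_Pf[OF assms(1-3)] by (simp add: G_def c_def)
  also have "\<dots> = (Mf \<mu> s - Mf \<mu> t) / (G - c)"
    by (metis minus_diff_eq minus_divide_divide)
  finally have "kf (Pf \<mu> t) s - (S * Gf \<mu> (1 / s) - kf \<mu> t * c) / (Gf \<mu> (1 / s) - c)
      = ((Mf \<mu> s - Mf \<mu> t) - (S * G - kf \<mu> t * c)) / (G - c)"
    using Gf_eq_Mf[of "1 / s" \<mu>] pos by (simp add: G_def diff_divide_distrib)
  also have "(Mf \<mu> s - Mf \<mu> t) - (S * G - kf \<mu> t * c) = (kf \<mu> s - S) * G"
    using pos by (simp add: kf_def G_def c_def field_simps)
  finally show ?thesis by simp
qed

lemma tendsto_kf_Pf_theta_plus_B:
  assumes t: "t \<in> Theta_B"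
  shows "\<exists>R. ((\<lambda>b. (Lim theta_plus_B (kf \<mu>) * Gf \<mu> b - kf \<mu> t * (t * Mf \<mu> t))
                    / (Gf \<mu> b - t * Mf \<mu> t)) \<longlongrightarrow> R) (at_right B)
           \<and> (kf (Pf \<mu> t) \<longlongrightarrow> R) theta_plus_B"
proof -
  interpret Q: cs_generator "Pf \<mu> t" B by (rule cs_generator_Pf[OF t])
  define S c where "S = Lim theta_plus_B (kf \<mu>)" and "c = t * Mf \<mu> t"
  define T where "T b = (S * Gf \<mu> b - kf \<mu> t * c) / (Gf \<mu> b - c)" for b
  have S: "(kf \<mu> \<longlongrightarrow> S) theta_plus_B"
    unfolding S_def tendsto_Lim[OF theta_plus_B_nontrivial tendsto_kf_theta_plus_B]
    by (rule tendsto_kf_theta_plus_B)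
  obtain R where R: "(kf (Pf \<mu> t) \<longlongrightarrow> R) theta_plus_B" using Q.tendsto_kf_theta_plus_B by blast
  obtain C where C: "\<forall>\<^sub>F s in theta_plus_B. s \<in> Theta_B \<and> t < s
      \<and> 0 < s * Mf \<mu> s - c \<and> \<bar>s * Mf \<mu> s / (s * Mf \<mu> s - c)\<bar> \<le> C"
    using eventually_G_quotient_bounded[OF t] unfolding c_def by blast
  have "\<forall>\<^sub>F s in theta_plus_B. norm (kf (Pf \<mu> t) s - T (1 / s)) \<le> C * norm (kf \<mu> s - S)"
    using C
  proof eventually_elim
    case (elim s)
    then have "norm (kf (Pf \<mu> t) s - T (1 / s))
        = norm (kf \<mu> s - S) * \<bar>s * Mf \<mu> s / (s * Mf \<mu> s - c)\<bar>"
      using kf_Pf_minus_quotient[of s t S] t by (simp add: T_def c_def abs_mult)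
    also have "\<dots> \<le> norm (kf \<mu> s - S) * C" using elim by (intro mult_left_mono) auto
    finally show ?case by (simp add: mult.commute)
  qed
  moreover have "((\<lambda>s. C * norm (kf \<mu> s - S)) \<longlongrightarrow> 0) theta_plus_B"
    using S by (intro tendsto_mult_right_zero tendsto_norm_zero LIM_zero)
  ultimately have "((\<lambda>s. kf (Pf \<mu> t) s - T (1 / s)) \<longlongrightarrow> 0) theta_plus_B"
    by (rule Lim_null_comparison)
  from tendsto_diff[OF R this] have "((\<lambda>s. T (1 / s)) \<longlongrightarrow> R) theta_plus_B"
    by simp
  then have "((\<lambda>b. T (1 / (1 / b))) \<longlongrightarrow> R) (at_right B)"
    by (rule filterlim_compose[OF _ filterlim_inverse_theta_plus_B])
  then show ?thesis unfolding T_def S_def c_def using R by auto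
qed

lemma deriv_Vratio_B_neg:
  assumes "t \<in> Theta_B"
  shows "deriv Vratio_B (kf \<mu> t) < 0"
  using DERIV_imp_deriv[OF has_real_derivative_Vratio_B[OF assms]] Mf_sq_less_M2[OF assms] M2_pos[OF assms]
  by simp

lemma deriv_mult_Vratio_B:
  assumes "t \<in> Theta_B"
  shows "deriv (\<lambda>m. m * Vratio_B m) (kf \<mu> t) = Vratio_B (kf \<mu> t) + kf \<mu> t * deriv Vratio_B (kf \<mu> t)"
  using DERIV_mult[OF DERIV_ident has_real_derivative_Vratio_B[OF assms]]
  by (simp add: DERIV_imp_deriv DERIV_imp_deriv[OF has_real_derivative_Vratio_B[OF assms]])

end

lemma AE_le_Bnd:
  assumes prob: "prob_space \<nu>" and borel: "sets \<nu> = sets borel" and bdd: "bdd_above (supp \<nu>)"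
  shows "AE x in \<nu>. x \<le> Bnd \<nu>"
proof -
  interpret prob_space \<nu> by fact
  define I where "I = {p :: real \<times> real. fst p \<in> \<rat> \<and> snd p \<in> \<rat> \<and> measure \<nu> {fst p<..<snd p} = 0}"
  have "countable I"
  proof (rule countable_subset)
    show "I \<subseteq> \<rat> \<times> \<rat>" by (auto simp: I_def)
  qed (intro countable_SIGMA countable_rat)
  then have null: "(\<Union>p\<in>I. {fst p<..<snd p}) \<in> null_sets \<nu>"
  proof (rule null_sets_UN')
    fix p assume "p \<in> I"
    then show "{fst p<..<snd p} \<in> null_sets \<nu>"
      using borel by (simp add: I_def emeasure_eq_measure null_sets_def)
  qed
  have "{x \<in> space \<nu>. \<not> x \<le> Bnd \<nu>} \<subseteq> (\<Union>p\<in>I. {fst p<..<snd p})"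
  proof
    fix x assume "x \<in> {x \<in> space \<nu>. \<not> x \<le> Bnd \<nu>}"
    then have x: "Bnd \<nu> < x" by auto
    have "x \<notin> supp \<nu>"
    proof
      assume "x \<in> supp \<nu>"
      then have "x \<le> Sup (supp \<nu>)" using bdd by (rule cSup_upper)
      then show False using x unfolding Bnd_def by linarith
    qed
    then obtain e where e: "e > 0" "\<not> measure \<nu> {x - e<..<x + e} > 0" unfolding supp_def by auto
    obtain a where a: "a \<in> \<rat>" "x - e < a" "a < x" using Rats_dense_in_real[of "x - e" x] e by auto
    obtain b where b: "b \<in> \<rat>" "x < b" "b < x + e" using Rats_dense_in_real[of x "x + e"] e by auto
    have "measure \<nu> {a<..<b} \<le> measure \<nu> {x - e<..<x + e}"
      using a b borel by (intro finite_measure_mono) auto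
    then have "measure \<nu> {a<..<b} = 0" using e measure_nonneg[of \<nu> "{a<..<b}"] by linarith
    then have "(a, b) \<in> I" using a b by (auto simp: I_def)
    then show "x \<in> (\<Union>p\<in>I. {fst p<..<snd p})" using a b by force
  qed
  then show ?thesis by (rule AE_I'[OF null])
qed

lemma cs_generator_Bnd:
  assumes prob: "prob_space \<nu>" and borel: "sets \<nu> = sets borel"
    and nondeg: "\<not> (\<exists>c. measure \<nu> {c} = 1)" and bdd: "bdd_above (supp \<nu>)"
  shows "cs_generator \<nu> (Bnd \<nu>)"
proof (rule cs_generator.intro[OF prob borel])
  interpret prob_space \<nu> by (rule prob)
  show "0 \<le> Bnd \<nu>" by (simp add: Bnd_def)
  show "AE x in \<nu>. x \<le> Bnd \<nu>" by (rule AE_le_Bnd[OF prob borel bdd])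
  show "\<not> (AE x in \<nu>. x = c)" for c
  proof
    assume "AE x in \<nu>. x = c"
    moreover have "{x \<in> space \<nu>. x = c} = {c}" using sets_eq_imp_space_eq[OF borel] by auto
    moreover have "{c} \<in> sets \<nu>" using borel by simp
    ultimately have "prob {c} = 1" using prob_Collect_eq_1[of "\<lambda>x. x = c"] by simp
    then show False using nondeg by auto
  qed
qed

lemma (in cs_generator) defs_eq_at_Bnd:
  assumes "Bnd \<mu> = B"
  shows "Theta \<mu> = Theta_B" and "theta_plus_filter \<mu> = theta_plus_B"
    and "mplus \<mu> = Lim theta_plus_B (kf \<mu>)" and "psif \<mu> = psi_B"
    and "Vratio \<mu> = Vratio_B" and "Vf \<mu> = (\<lambda>m. m * Vratio_B m)"
proof -
  show Theta: "Theta \<mu> = Theta_B" and "theta_plus_filter \<mu> = theta_plus_B"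
    using assms by (simp_all add: Theta_def Theta_B_def theta_plus_filter_def theta_plus_B_def)
  then show "mplus \<mu> = Lim theta_plus_B (kf \<mu>)" by (simp add: mplus_def)
  show psif: "psif \<mu> = psi_B" by (simp add: fun_eq_iff psif_def psi_B_def Theta)
  show "Vratio \<mu> = Vratio_B" and "Vf \<mu> = (\<lambda>m. m * Vratio_B m)"
    by (simp_all add: fun_eq_iff Vratio_def Vf_def Vratio_B_def psif)
qed

theorem theorem2p3:
  fixes \<nu> :: "real measure" and m1 m :: real
  assumes prob: "prob_space \<nu>"
    and borel: "sets \<nu> = sets borel"
    and nondeg: "\<not> (\<exists>c. measure \<nu> {c} = 1)"
    and bdd: "bdd_above (supp \<nu>)"
    and m1_dom: "m1 \<in> kf \<nu> ` Theta \<nu>"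
    and m_dom: "m \<in> kf \<nu> ` Theta \<nu>"
  defines "k1 \<equiv> kf (Qf \<nu> m1)"
    and "psi1 \<equiv> the_inv_into (Theta \<nu>) (kf (Qf \<nu> m1))"
  defines "mbar \<equiv> k1 (psif \<nu> m)"
  shows
    "(m \<noteq> m1 \<and> m \<noteq> 0 \<and> m1 \<noteq> 0 \<longrightarrow>
        mbar = (m\<^sup>2 * Vf \<nu> m1 - m1\<^sup>2 * Vf \<nu> m) / (m * Vf \<nu> m1 - m1 * Vf \<nu> m))
     \<and> (m = m1 \<and> m1 \<noteq> 0 \<longrightarrow>
        mbar = (2 * m1 * Vf \<nu> m1 - m1\<^sup>2 * deriv (Vf \<nu>) m1)
               / (Vf \<nu> m1 - m1 * deriv (Vf \<nu>) m1))
     \<and> (m \<noteq> m1 \<and> m * m1 = 0 \<longrightarrow>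
        mbar = (m * Vratio \<nu> m1 - m1 * Vratio \<nu> m) / (Vratio \<nu> m1 - Vratio \<nu> m))
     \<and> (m = m1 \<and> m1 = 0 \<longrightarrow>
        mbar = m1 - Vratio \<nu> m1 / deriv (Vratio \<nu>) m1)
     \<and> (k1 \<longlongrightarrow> m1) (at_right 0)
     \<and> (\<exists>R. ((\<lambda>b. (mplus \<nu> * Gf \<nu> b - m1 * (1 / Vratio \<nu> m1))
                    / (Gf \<nu> b - 1 / Vratio \<nu> m1)) \<longlongrightarrow> R) (at_right (Bnd \<nu>))
            \<and> (k1 \<longlongrightarrow> R) (theta_plus_filter \<nu>))
     \<and> (1 / psi1 mbar - mbar) + mbar = Vratio \<nu> m + m"
proof -
  interpret cs_generator \<nu> "Bnd \<nu>" by (rule cs_generator_Bnd[OF prob borel nondeg bdd])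
  note defs = defs_eq_at_Bnd[OF refl]
  obtain t t1 where t: "t \<in> Theta_B" "m = kf \<nu> t" and t1: "t1 \<in> Theta_B" "m1 = kf \<nu> t1"
    using m_dom m1_dom defs(1) by auto
  have Q: "Qf \<nu> m1 = Pf \<nu> t1" by (simp add: Qf_def defs t1 psi_B_kf)
  then have k1: "k1 = kf (Pf \<nu> t1)" and mbar: "mbar = kf (Pf \<nu> t1) t"
    by (simp_all add: mbar_def k1_def defs t psi_B_kf)
  have off_diag: "mbar = (m * Vratio_B m1 - m1 * Vratio_B m) / (Vratio_B m1 - Vratio_B m)" if "m \<noteq> m1"
    using kf_Pf_Vratio_B[OF t(1) t1(1)] that unfolding mbar t(2) t1(2) by auto
  have diag: "mbar = m1 - Vratio_B m1 / deriv Vratio_B m1" if "m = m1"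
    using kf_Pf_diag_Vratio_B[OF t1(1)] that t t1 psi_B_kf unfolding mbar by metis
  have deriv_V: "deriv (\<lambda>m. m * Vratio_B m) m1 = Vratio_B m1 + m1 * deriv Vratio_B m1"
    and deriv_neq_0: "deriv Vratio_B m1 \<noteq> 0"
    using deriv_mult_Vratio_B[OF t1(1)] deriv_Vratio_B_neg[OF t1(1)] t1(2) by auto
  have "1 / Vratio_B m1 = t1 * Mf \<nu> t1" using Vratio_B_kf[OF t1(1)] t1(2) by simp
  then have limits: "(k1 \<longlongrightarrow> m1) (at_right 0)"
      "\<exists>R. ((\<lambda>b. (mplus \<nu> * Gf \<nu> b - m1 * (1 / Vratio \<nu> m1))
                    / (Gf \<nu> b - 1 / Vratio \<nu> m1)) \<longlongrightarrow> R) (at_right (Bnd \<nu>))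
            \<and> (k1 \<longlongrightarrow> R) (theta_plus_filter \<nu>)"
    using tendsto_kf_Pf_at_right_0[OF t1(1)] tendsto_kf_Pf_theta_plus_B[OF t1(1)]
    unfolding k1 defs t1(2) by simp_all
  have "psi1 mbar = psi_B m"
    using the_inv_into_kf_Pf[OF t(1) t1(1)] psi_B_kf[OF t(1)]
    unfolding psi1_def mbar Q defs t(2) by simp
  then have iii: "(1 / psi1 mbar - mbar) + mbar = Vratio \<nu> m + m"
    by (simp add: defs Vratio_B_def)
  show ?thesis
    using off_diag diag deriv_neq_0 real_divide_mult_form[of m m1]
      real_diag_mult_form[of m1 "deriv Vratio_B m1"] limits iii
    unfolding defs deriv_V by auto
qed

end
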